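(* Let $m\ge3$ be an integer and let $\mathbf{C}$ be a binary linear $[2^{2m-2}+2^{m-1}-1,\ 2m-1]$ code whose set of nonzero weights is $\{2^{2m-3},\,2^{2m-3}+2^{m-2},\,2^{2m-3}+2^{m-1}\}$. Then the code $\mathbf{C}'$ obtained from $\mathbf{C}$ by the extension construction is a minimal binary linear $[3\cdot2^{2m-3}-1,\ 2m-1,\ 2^{2m-3}]_2$ code with maximum weight $2^{2m-2}$ which violates the Ashikhmin–Barg condition. Moreover, when $m\ge4$, $\mathbf{C}'$ is self-orthogonal.
   Context: Extension construction for a binary $[N,K]$ code $\mathbf{D}$, $K\ge2$, with minimum nonzero weight $w_{min}$, maximum weight $w_{max}$ and $n'=2w_{min}-w_{max}\ge1$: choose a basis $\mathbf{r}_1,\dots,\mathbf{r}_K$ with $wt(\mathbf{r}_1)=w_{max}$, $wt(\mathbf{r}_2)=w_{min}$; the extended code is generated by $(\mathbf{1},\mathbf{r}_1),(\mathbf{0},\mathbf{r}_2),\dots,(\mathbf{0},\mathbf{r}_K)$ in $\mathbf{F}_2^{n'+N}$, with $\mathbf{1},\mathbf{0}\in\mathbf{F}_2^{n'}$. Self-orthogonal: $\mathbf{C}\subseteq\mathbf{C}^\perp$. Minimal code: nonzero codewords with nested supports are equal. Ashikhmin–Barg condition (binary): $w_{min}/w_{max}>1/2$. *)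

theory Defs
  imports Complex_Main
begin

text \<open>Binary vectors of length n are represented as bool lists of length n
  (True = 1, False = 0); addition is componentwise exclusive or.\<close>

type_synonym bvec = "bool list"

definition vzero :: "nat \<Rightarrow> bvec" where
  "vzero n = replicate n False"

definition vadd :: "bvec \<Rightarrow> bvec \<Rightarrow> bvec" where
  "vadd x y = map2 (\<noteq>) x y"

definition wt :: "bvec \<Rightarrow> nat" where
  "wt x = length (filter id x)"

definition supp :: "bvec \<Rightarrow> nat set" where
  "supp x = {i. i < length x \<and> x ! i}"

definition inner2 :: "bvec \<Rightarrow> bvec \<Rightarrow> bool" where
  "inner2 x y = odd (length (filter id (map2 (\<and>) x y)))"

definition lin_code :: "nat \<Rightarrow> bvec set \<Rightarrow> bool" where
  "lin_code n C \<longleftrightarrow> C \<subseteq> {v. length v = n} \<and> vzero n \<in> C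
     \<and> (\<forall>x\<in>C. \<forall>y\<in>C. vadd x y \<in> C)"

definition comb :: "nat \<Rightarrow> bvec list \<Rightarrow> bool list \<Rightarrow> bvec" where
  "comb n rs cs = foldr vadd (map snd (filter fst (zip cs rs))) (vzero n)"

definition span2 :: "nat \<Rightarrow> bvec list \<Rightarrow> bvec set" where
  "span2 n rs = {comb n rs cs | cs. length cs = length rs}"

definition is_basis :: "nat \<Rightarrow> bvec set \<Rightarrow> bvec list \<Rightarrow> bool" where
  "is_basis n C rs \<longleftrightarrow> (\<forall>r\<in>set rs. length r = n) \<and> span2 n rs = C
     \<and> inj_on (comb n rs) {cs. length cs = length rs}"

definition has_dim :: "nat \<Rightarrow> bvec set \<Rightarrow> nat \<Rightarrow> bool" where
  "has_dim n C k \<longleftrightarrow> lin_code n C \<and> (\<exists>rs. length rs = k \<and> is_basis n C rs)"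

definition wts :: "bvec set \<Rightarrow> nat set" where
  "wts C = {wt c | c. c \<in> C \<and> wt c \<noteq> 0}"

definition wmin :: "bvec set \<Rightarrow> nat" where
  "wmin C = Min (wts C)"

definition wmax :: "bvec set \<Rightarrow> nat" where
  "wmax C = Max (wts C)"

text \<open>Extension construction: basis rs (indices 0,1 play the roles of r_1, r_2),
  n' = 2 wmin - wmax, generators (1,r_1), (0,r_2), ..., (0,r_K).\<close>
definition ext_code :: "nat \<Rightarrow> bvec set \<Rightarrow> bvec list \<Rightarrow> bvec set" where
  "ext_code N D rs =
     (let n' = 2 * wmin D - wmax D in
      span2 (n' + N) ((replicate n' True @ hd rs) # map (\<lambda>r. replicate n' False @ r) (tl rs)))"

definition dual_code :: "nat \<Rightarrow> bvec set \<Rightarrow> bvec set" where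
  "dual_code n C = {v. length v = n \<and> (\<forall>c\<in>C. \<not> inner2 c v)}"

definition self_orthogonal :: "nat \<Rightarrow> bvec set \<Rightarrow> bool" where
  "self_orthogonal n C \<longleftrightarrow> C \<subseteq> dual_code n C"

definition minimal_code :: "bvec set \<Rightarrow> bool" where
  "minimal_code C \<longleftrightarrow> (\<forall>c\<in>C. \<forall>c'\<in>C. wt c \<noteq> 0 \<and> wt c' \<noteq> 0 \<and> supp c \<subseteq> supp c' \<longrightarrow> c = c')"

definition AB_condition :: "bvec set \<Rightarrow> bool" where
  "AB_condition C \<longleftrightarrow> real (wmin C) / real (wmax C) > 1 / 2"

end

theory Submission
  imports Defs
begin

(* A word of the extended code is (c 1, x) with x in C, 1 the all-ones vector of length n'
   and c the coefficient of r_1 in x, so its weight is wt x or n' + wt x.  Since n' + w_max = 2 w_min, all nonzero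
   weights lie in [w_min, 2 w_min] and both ends are attained, so the Ashikhmin-Barg
   ratio is exactly 1/2.  Minimality is inherited from C, which is itself minimal
   because w_max < 2 w_min: nested supports x, y in C give wt y = wt x + wt (x + y).
   For m >= 4 all weights of C and n' are divisible by 4, and a doubly-even binary
   code is self-orthogonal. *)

lemma length_vadd [simp]: "length (vadd x y) = min (length x) (length y)"
  by (simp add: vadd_def)

lemma nth_vadd [simp]: "i < length x \<Longrightarrow> i < length y \<Longrightarrow> vadd x y ! i = (x ! i \<noteq> y ! i)"
  by (simp add: vadd_def)

lemma vadd_Nil [simp]: "vadd [] [] = []"
  by (simp add: vadd_def)

lemma vadd_Cons [simp]: "vadd (a # x) (b # y) = (a \<noteq> b) # vadd x y"
  by (simp add: vadd_def)

lemma vadd_append: "length a = length c \<Longrightarrow> vadd (a @ b) (c @ d) = vadd a c @ vadd b d"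
  by (simp add: vadd_def)

lemma vadd_replicate [simp]: "vadd (replicate k a) (replicate k b) = replicate k (a \<noteq> b)"
  by (induction k) auto

lemma length_vzero [simp]: "length (vzero n) = n"
  by (simp add: vzero_def)

lemma nth_vzero [simp]: "i < n \<Longrightarrow> vzero n ! i = False"
  by (simp add: vzero_def)

lemma vadd_vzero_right [simp]: "length x = n \<Longrightarrow> vadd x (vzero n) = x"
  by (rule nth_equalityI) auto

lemma vadd_cancel_left:
  "length r = n \<Longrightarrow> length x = n \<Longrightarrow> length y = n \<Longrightarrow> vadd (vadd r x) (vadd r y) = vadd x y"
  by (rule nth_equalityI) auto

lemma vadd_assoc:
  "length r = n \<Longrightarrow> length x = n \<Longrightarrow> length y = n \<Longrightarrow> vadd r (vadd x y) = vadd (vadd r x) y"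
  by (rule nth_equalityI) auto

lemma vadd_left_commute:
  "length r = n \<Longrightarrow> length x = n \<Longrightarrow> length y = n \<Longrightarrow> vadd r (vadd x y) = vadd x (vadd r y)"
  by (rule nth_equalityI) auto

lemma vadd_eq_vzero_iff: "length x = n \<Longrightarrow> length y = n \<Longrightarrow> vadd x y = vzero n \<longleftrightarrow> x = y"
  by (auto simp: list_eq_iff_nth_eq)

lemma wt_Nil [simp]: "wt [] = 0"
  by (simp add: wt_def)

lemma wt_Cons [simp]: "wt (a # x) = (if a then Suc (wt x) else wt x)"
  by (simp add: wt_def)

lemma wt_append [simp]: "wt (x @ y) = wt x + wt y"
  by (simp add: wt_def)

lemma wt_replicate [simp]: "wt (replicate k a) = (if a then k else 0)"
  by (simp add: wt_def)

lemma wt_eq_0_iff: "wt x = 0 \<longleftrightarrow> x = vzero (length x)"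
  by (induction x) (auto simp: vzero_def)

lemma wt_vadd_inner:
  "length x = length y \<Longrightarrow> wt (vadd x y) + 2 * length (filter id (map2 (\<and>) x y)) = wt x + wt y"
  by (induction x y rule: list_induct2) auto

lemma wt_vadd_if_supp_subset:
  assumes "length x = length y" and "supp x \<subseteq> supp y"
  shows "wt (vadd x y) + wt x = wt y"
  using assms
proof (induction x y rule: list_induct2)
  case Nil
  then show ?case by simp
next
  case (Cons a x b y)
  have "supp x \<subseteq> supp y" and "a \<longrightarrow> b"
    using Cons.prems by (fastforce simp: supp_def)+
  with Cons.IH show ?case by auto
qed

lemma supp_drop_mono:
  assumes "supp x \<subseteq> supp y"
  shows "supp (drop k x) \<subseteq> supp (drop k y)"
proof
  fix i assume "i \<in> supp (drop k x)"
  then have "k + i \<in> supp x"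
    by (auto simp: supp_def)
  with assms have "k + i \<in> supp y" ..
  then show "i \<in> supp (drop k y)"
    by (auto simp: supp_def)
qed

lemma comb_Cons [simp]:
  "comb n (r # rs) (c # cs) = (if c then vadd r (comb n rs cs) else comb n rs cs)"
  by (simp add: comb_def)

lemma comb_Nil [simp]: "comb n [] cs = vzero n" "comb n rs [] = vzero n"
  by (simp_all add: comb_def)

lemma length_comb [simp]: "\<forall>r\<in>set rs. length r = n \<Longrightarrow> length (comb n rs cs) = n"
proof (induction rs arbitrary: cs)
  case (Cons r rs)
  then show ?case by (cases cs) auto
qed simp

lemma comb_replicate_False [simp]: "comb n rs (replicate k False) = vzero n"
proof (induction rs arbitrary: k)
  case (Cons r rs)
  then show ?case by (cases k) auto
qed simp

lemma comb_unit:
  "\<forall>r\<in>set rs. length r = n \<Longrightarrow> i < length rs \<Longrightarrow>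
     comb n rs (replicate i False @ True # replicate j False) = rs ! i"
proof (induction rs arbitrary: i)
  case (Cons r rs)
  then show ?case by (cases i) auto
qed simp

lemma comb_map2_xor:
  assumes "\<forall>r\<in>set rs. length r = n" and "length cs = length rs" and "length ds = length rs"
  shows "comb n rs (map2 (\<noteq>) cs ds) = vadd (comb n rs cs) (comb n rs ds)"
  using assms
proof (induction rs arbitrary: cs ds)
  case Nil
  then show ?case by simp
next
  case (Cons r rs)
  then obtain c cs' d ds' where cs: "cs = c # cs'" and ds: "ds = d # ds'"
    by (cases cs; cases ds) auto
  with Cons have IH: "comb n rs (map2 (\<noteq>) cs' ds') = vadd (comb n rs cs') (comb n rs ds')"
    by simp
  have r: "length r = n" and X: "length (comb n rs cs') = n" and Y: "length (comb n rs ds') = n"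
    using Cons.prems(1) by auto
  show ?case
  proof (cases c; cases d)
    assume c d
    then show ?thesis using IH vadd_cancel_left[OF r X Y] by (simp add: cs ds)
  next
    assume c "\<not> d"
    then show ?thesis using IH vadd_assoc[OF r X Y] by (simp add: cs ds)
  next
    assume "\<not> c" d
    then show ?thesis using IH vadd_left_commute[OF r X Y] by (simp add: cs ds)
  next
    assume "\<not> c" "\<not> d"
    then show ?thesis using IH by (simp add: cs ds)
  qed
qed

lemma comb_prepend_False:
  "comb (k + n) (map (\<lambda>r. replicate k False @ r) rs) cs = replicate k False @ comb n rs cs"
proof (induction rs arbitrary: cs)
  case Nil
  then show ?case by (simp add: vzero_def replicate_add)
next
  case (Cons r rs)
  then show ?case by (cases cs) (auto simp: vadd_append vzero_def replicate_add)
qed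

lemma lin_code_span2:
  assumes "\<forall>r\<in>set rs. length r = n"
  shows "lin_code n (span2 n rs)"
  unfolding lin_code_def
proof (intro conjI ballI)
  show "span2 n rs \<subseteq> {v. length v = n}"
    using assms by (auto simp: span2_def)
  show "vzero n \<in> span2 n rs"
    unfolding span2_def by (intro CollectI exI[of _ "replicate (length rs) False"]) simp
  fix x y assume "x \<in> span2 n rs" and "y \<in> span2 n rs"
  then obtain cs ds where "length cs = length rs" "length ds = length rs"
    and "x = comb n rs cs" "y = comb n rs ds"
    by (auto simp: span2_def)
  with comb_map2_xor[OF assms] show "vadd x y \<in> span2 n rs"
    unfolding span2_def by (intro CollectI exI[of _ "map2 (\<noteq>) cs ds"]) auto
qed

lemma has_dim_span2:
  "\<forall>r\<in>set rs. length r = n \<Longrightarrow> inj_on (comb n rs) {cs. length cs = length rs} \<Longrightarrow>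
     has_dim n (span2 n rs) (length rs)"
  by (auto simp: has_dim_def is_basis_def lin_code_span2)

lemma is_basis_imp_lin_code: "is_basis n C rs \<Longrightarrow> lin_code n C"
  unfolding is_basis_def using lin_code_span2 by blast

lemma is_basis_nth_nonzero:
  assumes "is_basis n C rs" and "i < length rs"
  shows "wt (rs ! i) \<noteq> 0"
proof
  let ?e = "replicate i False @ True # replicate (length rs - Suc i) False"
  have lengths: "\<forall>r\<in>set rs. length r = n" and inj: "inj_on (comb n rs) {cs. length cs = length rs}"
    using assms(1) by (auto simp: is_basis_def)
  assume "wt (rs ! i) = 0"
  then have "comb n rs ?e = comb n rs (replicate (length rs) False)"
    using lengths assms(2) by (simp add: comb_unit wt_eq_0_iff)
  with inj have "?e = replicate (length rs) False"
    by (rule inj_onD) (use assms(2) in auto)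
  then have "?e ! i = replicate (length rs) False ! i"
    by simp
  with assms(2) show False
    by (simp add: nth_append)
qed

lemma wt_mem_wts: "c \<in> C \<Longrightarrow> wt c \<noteq> 0 \<Longrightarrow> wt c \<in> wts C"
  by (auto simp: wts_def)

lemma finite_wts: "lin_code n C \<Longrightarrow> finite (wts C)"
proof (rule finite_subset)
  show "wts C \<subseteq> {..n}" if "lin_code n C"
    using that by (auto simp: wts_def lin_code_def wt_def)
qed simp

lemma wts_between_wmin_wmax: "lin_code n C \<Longrightarrow> w \<in> wts C \<Longrightarrow> wmin C \<le> w \<and> w \<le> wmax C"
  by (simp add: wmin_def wmax_def finite_wts)

lemma four_dvd_wt_if_four_dvd_wts: "\<forall>w\<in>wts C. 4 dvd w \<Longrightarrow> c \<in> C \<Longrightarrow> 4 dvd wt c"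
  by (cases "wt c = 0") (auto simp: wts_def)

lemma minimal_code_if_wmax_less_double_wmin:
  assumes lin: "lin_code n C" and wmax_less: "wmax C < 2 * wmin C"
  shows "minimal_code C"
  unfolding minimal_code_def
proof (intro ballI impI, elim conjE)
  fix x y assume "x \<in> C" "y \<in> C" "wt x \<noteq> 0" "wt y \<noteq> 0" "supp x \<subseteq> supp y"
  moreover have "length x = n" "length y = n" "vadd x y \<in> C"
    using lin \<open>x \<in> C\<close> \<open>y \<in> C\<close> by (auto simp: lin_code_def)
  ultimately have sum: "wt (vadd x y) + wt x = wt y" and "wt x \<in> wts C" "wt y \<in> wts C"
    using wt_vadd_if_supp_subset by (auto simp: wts_def)
  show "x = y"
  proof (rule ccontr)
    assume "x \<noteq> y"
    with \<open>vadd x y \<in> C\<close> have "wt (vadd x y) \<in> wts C"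
      using \<open>length x = n\<close> \<open>length y = n\<close> by (auto simp: wts_def wt_eq_0_iff vadd_eq_vzero_iff)
    with \<open>wt x \<in> wts C\<close> \<open>wt y \<in> wts C\<close>
    have "wmin C \<le> wt (vadd x y)" "wmin C \<le> wt x" "wt y \<le> wmax C"
      using wts_between_wmin_wmax[OF lin] by blast+
    with sum wmax_less show False
      by linarith
  qed
qed

lemma self_orthogonal_if_doubly_even:
  assumes lin: "lin_code n C" and four_dvd: "\<forall>c\<in>C. 4 dvd wt c"
  shows "self_orthogonal n C"
  unfolding self_orthogonal_def dual_code_def
proof (intro subsetI CollectI conjI ballI)
  fix u assume "u \<in> C"
  then show "length u = n"
    using lin by (auto simp: lin_code_def)
  fix c assume "c \<in> C"
  then have "length c = n" "vadd c u \<in> C"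
    using lin \<open>u \<in> C\<close> by (auto simp: lin_code_def)
  with \<open>length u = n\<close> have "wt (vadd c u) + 2 * length (filter id (map2 (\<and>) c u)) = wt c + wt u"
    using wt_vadd_inner[of c u] by simp
  moreover have "4 dvd wt (vadd c u)" "4 dvd wt c" "4 dvd wt u"
    using four_dvd \<open>u \<in> C\<close> \<open>c \<in> C\<close> \<open>vadd c u \<in> C\<close> by auto
  moreover have "even k" if "wt (vadd c u) + 2 * k = wt c + wt u"
    and "4 dvd wt (vadd c u)" "4 dvd wt c" "4 dvd wt u" for k
    using that by presburger
  ultimately show "\<not> inner2 c u"
    unfolding inner2_def by blast
qed

lemma not_AB_condition_if_wmax_double: "wmax C = 2 * wmin C \<Longrightarrow> \<not> AB_condition C"
  by (simp add: AB_condition_def)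

locale code_extension =
  fixes N :: nat and D :: "bvec set" and rs :: "bvec list"
  assumes basis: "is_basis N D rs" and two_le_dim: "2 \<le> length rs"
begin

definition pad :: nat where
  "pad = 2 * wmin D - wmax D"

definition ext_generators :: "bvec list" where
  "ext_generators = (replicate pad True @ hd rs) # map (\<lambda>r. replicate pad False @ r) (tl rs)"

definition ext_word :: "bool list \<Rightarrow> bvec" where
  "ext_word cs = replicate pad (hd cs) @ comb N rs cs"

lemma length_basis: "\<forall>r\<in>set rs. length r = N"
  using basis by (simp add: is_basis_def)

lemma inj_on_comb: "inj_on (comb N rs) {cs. length cs = length rs}"
  using basis by (simp add: is_basis_def)

lemma comb_mem: "length cs = length rs \<Longrightarrow> comb N rs cs \<in> D"
  using basis by (auto simp: is_basis_def span2_def)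

lemma comb_eq_vzero_iff:
  "length cs = length rs \<Longrightarrow> comb N rs cs = vzero N \<longleftrightarrow> cs = replicate (length rs) False"
  using inj_onD[OF inj_on_comb, of cs "replicate (length rs) False"] by auto

lemma wt_ext_word: "wt (ext_word cs) = (if hd cs then pad else 0) + wt (comb N rs cs)"
  by (simp add: ext_word_def)

lemma drop_ext_word [simp]: "drop pad (ext_word cs) = comb N rs cs"
  by (simp add: ext_word_def)

lemma wt_comb_nonzero_if_hd:
  assumes "length cs = length rs" and "hd cs"
  shows "wt (comb N rs cs) \<noteq> 0"
proof
  assume "wt (comb N rs cs) = 0"
  then have "cs = replicate (length rs) False"
    using assms(1) length_basis by (simp add: wt_eq_0_iff comb_eq_vzero_iff)
  with assms(2) two_le_dim show False
    by (cases "length rs") auto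
qed

lemma wt_comb_nonzero_if_wt_ext_word_nonzero:
  assumes "length cs = length rs" and "wt (ext_word cs) \<noteq> 0"
  shows "wt (comb N rs cs) \<noteq> 0"
  using assms wt_comb_nonzero_if_hd by (auto simp: wt_ext_word split: if_splits)

lemma comb_ext_generators:
  assumes "length cs = length rs"
  shows "comb (pad + N) ext_generators cs = ext_word cs"
proof -
  obtain r rs' where rs: "rs = r # rs'"
    using two_le_dim by (cases rs) auto
  obtain c cs' where cs: "cs = c # cs'"
    using assms rs by (cases cs) auto
  have "length r = N"
    using length_basis rs by simp
  then show ?thesis
    unfolding ext_generators_def ext_word_def
    by (cases c) (simp_all add: rs cs comb_prepend_False vadd_append)
qed

lemma ext_code_eq_span2: "ext_code N D rs = span2 (pad + N) ext_generators"
  by (simp add: ext_code_def pad_def ext_generators_def Let_def)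

lemma length_ext_generators: "length ext_generators = length rs"
  using two_le_dim by (simp add: ext_generators_def)

lemma ext_code_eq_image: "ext_code N D rs = ext_word ` {cs. length cs = length rs}"
proof -
  have "ext_code N D rs = {ext_word cs | cs. length cs = length rs}"
    unfolding ext_code_eq_span2 span2_def length_ext_generators
    by (intro Collect_cong ex_cong1) (auto simp: comb_ext_generators)
  then show ?thesis
    by blast
qed

lemma has_dim_ext_code: "has_dim (pad + N) (ext_code N D rs) (length rs)"
proof -
  have "\<forall>r\<in>set ext_generators. length r = pad + N"
    unfolding ext_generators_def using length_basis two_le_dim by (cases rs) auto
  moreover have "inj_on ext_word {cs. length cs = length rs}"
  proof (rule inj_onI)
    fix cs ds assume "cs \<in> {cs. length cs = length rs}" "ds \<in> {cs. length cs = length rs}"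
      and "ext_word cs = ext_word ds"
    moreover from \<open>ext_word cs = ext_word ds\<close> have "comb N rs cs = comb N rs ds"
      using drop_ext_word by metis
    ultimately show "cs = ds"
      using inj_onD[OF inj_on_comb] by blast
  qed
  then have "inj_on (comb (pad + N) ext_generators) {cs. length cs = length ext_generators}"
    using inj_on_cong[of "{cs. length cs = length rs}" "comb (pad + N) ext_generators" ext_word]
    by (simp add: length_ext_generators comb_ext_generators)
  ultimately show ?thesis
    unfolding ext_code_eq_span2 using has_dim_span2[of ext_generators "pad + N"]
    by (simp add: length_ext_generators)
qed

lemma lin_code_ext_code: "lin_code (pad + N) (ext_code N D rs)"
  using has_dim_ext_code by (simp add: has_dim_def)

lemma ext_word_mem: "length cs = length rs \<Longrightarrow> ext_word cs \<in> ext_code N D rs"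
  by (simp add: ext_code_eq_image)

lemma ext_codeE:
  assumes "u \<in> ext_code N D rs"
  obtains cs where "length cs = length rs" and "u = ext_word cs"
  using assms by (auto simp: ext_code_eq_image)

lemma wts_ext_code_bounds:
  assumes wmax_le: "wmax D \<le> 2 * wmin D" and w: "w \<in> wts (ext_code N D rs)"
  shows "wmin D \<le> w \<and> w \<le> 2 * wmin D"
proof -
  obtain cs where cs: "length cs = length rs" and nonzero: "wt (ext_word cs) \<noteq> 0"
    and w_eq: "w = wt (ext_word cs)"
    using w by (auto simp: wts_def elim: ext_codeE)
  have "wt (comb N rs cs) \<in> wts D"
    using comb_mem[OF cs] wt_comb_nonzero_if_wt_ext_word_nonzero[OF cs nonzero] by (auto simp: wts_def)
  then have "wmin D \<le> wt (comb N rs cs)" "wt (comb N rs cs) \<le> wmax D"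
    using wts_between_wmin_wmax[OF is_basis_imp_lin_code[OF basis]] by auto
  with wmax_le show ?thesis
    unfolding w_eq wt_ext_word pad_def by auto
qed

lemma ext_word_first_unit: "ext_word (True # replicate (length rs - 1) False) = replicate pad True @ rs ! 0"
proof -
  have "0 < length rs"
    using two_le_dim by linarith
  then show ?thesis
    using comb_unit[OF length_basis, of 0 "length rs - 1"] by (simp add: ext_word_def)
qed

lemma ext_word_second_unit:
  "ext_word (False # True # replicate (length rs - 2) False) = replicate pad False @ rs ! 1"
  using comb_unit[OF length_basis, of 1 "length rs - 2"] two_le_dim by (simp add: ext_word_def)

lemma wmin_wmax_ext_code:
  assumes wt_first: "wt (rs ! 0) = wmax D" and wt_second: "wt (rs ! 1) = wmin D"
    and wmax_le: "wmax D \<le> 2 * wmin D"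
  shows "wmin (ext_code N D rs) = wmin D" and "wmax (ext_code N D rs) = 2 * wmin D"
proof -
  let ?e1 = "True # replicate (length rs - 1) False"
  let ?e2 = "False # True # replicate (length rs - 2) False"
  have "length ?e1 = length rs" "length ?e2 = length rs"
    using two_le_dim by auto
  then have mem1: "ext_word ?e1 \<in> ext_code N D rs" and mem2: "ext_word ?e2 \<in> ext_code N D rs"
    by (simp_all add: ext_word_mem)
  have wt1: "wt (ext_word ?e1) = 2 * wmin D"
    unfolding ext_word_first_unit using wt_first wmax_le by (simp add: pad_def)
  have wt2: "wt (ext_word ?e2) = wmin D"
    unfolding ext_word_second_unit using wt_second by simp
  have "wmin D \<noteq> 0"
    using is_basis_nth_nonzero[OF basis, of 1] two_le_dim wt_second by simp
  then have in1: "2 * wmin D \<in> wts (ext_code N D rs)" and in2: "wmin D \<in> wts (ext_code N D rs)"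
    using wt_mem_wts[OF mem1] wt_mem_wts[OF mem2] wt1 wt2 by simp_all
  have fin: "finite (wts (ext_code N D rs))"
    by (rule finite_wts[OF lin_code_ext_code])
  have "Min (wts (ext_code N D rs)) = wmin D"
    using wts_ext_code_bounds[OF wmax_le] by (intro Min_eqI[OF fin _ in2]) blast
  then show "wmin (ext_code N D rs) = wmin D"
    by (simp only: wmin_def)
  have "Max (wts (ext_code N D rs)) = 2 * wmin D"
    using wts_ext_code_bounds[OF wmax_le] by (intro Max_eqI[OF fin _ in1]) blast
  then show "wmax (ext_code N D rs) = 2 * wmin D"
    by (simp only: wmax_def)
qed

lemma minimal_code_ext_code:
  assumes "minimal_code D"
  shows "minimal_code (ext_code N D rs)"
  unfolding minimal_code_def
proof (intro ballI impI, elim conjE)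
  fix u v assume "u \<in> ext_code N D rs" "v \<in> ext_code N D rs"
    and "wt u \<noteq> 0" "wt v \<noteq> 0" and supp_uv: "supp u \<subseteq> supp v"
  then obtain cs ds where cs: "length cs = length rs" "u = ext_word cs"
    and ds: "length ds = length rs" "v = ext_word ds"
    by (metis ext_codeE)
  have "supp (comb N rs cs) \<subseteq> supp (comb N rs ds)"
    using supp_drop_mono[OF supp_uv, of pad] cs ds by simp
  moreover have "wt (comb N rs cs) \<noteq> 0" "wt (comb N rs ds) \<noteq> 0"
    using wt_comb_nonzero_if_wt_ext_word_nonzero cs ds \<open>wt u \<noteq> 0\<close> \<open>wt v \<noteq> 0\<close> by auto
  ultimately have "comb N rs cs = comb N rs ds"
    using assms comb_mem[OF cs(1)] comb_mem[OF ds(1)] unfolding minimal_code_def by blast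
  then have "cs = ds"
    using inj_onD[OF inj_on_comb] cs(1) ds(1) by simp
  with cs ds show "u = v"
    by simp
qed

lemma doubly_even_ext_code:
  assumes "4 dvd pad" and "\<forall>c\<in>D. 4 dvd wt c"
  shows "\<forall>u\<in>ext_code N D rs. 4 dvd wt u"
proof
  fix u assume "u \<in> ext_code N D rs"
  then obtain cs where "length cs = length rs" and "u = ext_word cs"
    by (rule ext_codeE)
  with assms comb_mem show "4 dvd wt u"
    by (simp add: wt_ext_word)
qed

end

lemma powers_of_two_in_half_exponent:
  assumes "3 \<le> m"
  shows "(2::nat) ^ (2 * m - 3) = 2 * 2 ^ (m - 2) * 2 ^ (m - 2)"
    and "(2::nat) ^ (2 * m - 2) = 4 * 2 ^ (m - 2) * 2 ^ (m - 2)"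
    and "(2::nat) ^ (m - 1) = 2 * 2 ^ (m - 2)"
proof -
  have "2 * m - 3 = 1 + (m - 2) + (m - 2)" "2 * m - 2 = 2 + (m - 2) + (m - 2)" "m - 1 = 1 + (m - 2)"
    using assms by arith+
  then show "(2::nat) ^ (2 * m - 3) = 2 * 2 ^ (m - 2) * 2 ^ (m - 2)"
    and "(2::nat) ^ (2 * m - 2) = 4 * 2 ^ (m - 2) * 2 ^ (m - 2)"
    and "(2::nat) ^ (m - 1) = 2 * 2 ^ (m - 2)"
    by (simp_all only: power_add) simp_all
qed

theorem proposition5p3:
  fixes m :: nat and C :: "bvec set" and rs :: "bvec list"
  assumes "m \<ge> 3"
    and "has_dim (2^(2*m-2) + 2^(m-1) - 1) C (2*m-1)"
    and "wts C = {2^(2*m-3), 2^(2*m-3) + 2^(m-2), 2^(2*m-3) + 2^(m-1)}"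
    and "length rs = 2*m-1"
    and "is_basis (2^(2*m-2) + 2^(m-1) - 1) C rs"
    and "wt (rs ! 0) = wmax C" and "wt (rs ! 1) = wmin C"
  shows "let C' = ext_code (2^(2*m-2) + 2^(m-1) - 1) C rs in
           has_dim (3 * 2^(2*m-3) - 1) C' (2*m-1)
         \<and> wmin C' = 2^(2*m-3)
         \<and> wmax C' = 2^(2*m-2)
         \<and> minimal_code C'
         \<and> \<not> AB_condition C'
         \<and> (m \<ge> 4 \<longrightarrow> self_orthogonal (3 * 2^(2*m-3) - 1) C')"
proof -
  define t :: nat where "t = 2 ^ (m - 2)"
  define N :: nat where "N = 2^(2*m-2) + 2^(m-1) - 1"
  have "2 ^ 1 \<le> t"
    unfolding t_def using assms(1) by (intro power_increasing) auto
  then have t: "2 * t \<le> t * t" "t < t * t"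
    by simp_all
  note powers = powers_of_two_in_half_exponent[OF assms(1), folded t_def]
  have wts_C: "wts C = {2*t*t, 2*t*t + t, 2*t*t + 2*t}"
    using assms(3) unfolding powers t_def[symmetric] .
  have wmin_C: "wmin C = 2*t*t" and wmax_C: "wmax C = 2*t*t + 2*t"
    by (simp_all add: wmin_def wmax_def wts_C)
  interpret code_extension N C rs
    using assms(1,4,5) by unfold_locales (simp_all add: N_def)
  have pad: "pad = 2*t*t - 2*t"
    by (simp add: pad_def wmin_C wmax_C)
  have "N = 4*t*t + 2*t - 1"
    unfolding N_def powers t_def[symmetric] ..
  then have length: "3 * 2^(2*m-3) - 1 = pad + N"
    unfolding pad powers using t by (simp add: algebra_simps)
  have "minimal_code C"
    using wmin_C wmax_C t
    by (intro minimal_code_if_wmax_less_double_wmin[OF is_basis_imp_lin_code[OF basis]]) simp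
  have doubly_even: "4 dvd pad" "\<forall>c\<in>C. 4 dvd wt c" if "4 \<le> m"
  proof -
    have "m - 2 = 2 + (m - 4)"
      using that by arith
    then have "4 dvd t"
      by (simp add: t_def power_add)
    then show "4 dvd pad"
      by (simp add: pad dvd_diff_nat dvd_mult)
    from \<open>4 dvd t\<close> show "\<forall>c\<in>C. 4 dvd wt c"
      by (intro ballI four_dvd_wt_if_four_dvd_wts) (auto simp: wts_C intro: dvd_add dvd_mult)
  qed
  have wmax_le: "wmax C \<le> 2 * wmin C"
    using wmin_C wmax_C t by simp
  show ?thesis
    unfolding Let_def N_def[symmetric] length assms(4)[symmetric]
  proof (intro conjI impI)
    show "has_dim (pad + N) (ext_code N C rs) (length rs)"
      by (rule has_dim_ext_code)
    show "wmin (ext_code N C rs) = 2 ^ (2 * m - 3)" "wmax (ext_code N C rs) = 2 ^ (2 * m - 2)"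
      using wmin_wmax_ext_code[OF assms(6,7) wmax_le] by (simp_all add: wmin_C powers)
    then show "\<not> AB_condition (ext_code N C rs)"
      by (intro not_AB_condition_if_wmax_double) (simp add: powers)
    show "minimal_code (ext_code N C rs)"
      using minimal_code_ext_code \<open>minimal_code C\<close> by blast
    show "self_orthogonal (pad + N) (ext_code N C rs)" if "4 \<le> m"
      using doubly_even[OF that] lin_code_ext_code doubly_even_ext_code self_orthogonal_if_doubly_even
      by blast
  qed
qed

end
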